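(* Assume (A1), (A2), (A3) (see context). If $\mathbb P$ has finite range of dependence or has negative association, then there is a constant $c>0$ such that $\mathbb P(\xi(\Lambda_\ell)=0)\le e^{-c\ell^d}$ for all $\ell\ge1$. In particular $\mathbb P$ satisfies Condition $C(\alpha)$ for every $\alpha>0$.
   Context: $\Lambda_\ell=[-\ell,\ell]^d$. $\mathcal N$ = locally finite subsets of $\mathbb R^d$, identified with counting measures ($\xi(A)=\#(\xi\cap A)$), with $\sigma$-algebra generated by $\xi\mapsto\xi(A)$; $\tau_x\xi:=\xi-x$. $\mathrm{DT}(\xi)$: graph on $\xi$ with edges $\{x,y\}$ whose Voronoi cells $\mathrm{Vor}(\cdot|\xi)=\{y:|y-\cdot|\le|y-z|\,\forall z\in\xi\}$ share a $(d-1)$-dimensional face. Setting: $(\Omega,\mathcal F,\mathcal P)$ probability space with measurable $\mathbb R^d$-action $(\theta_x)$; simple point process $\omega\mapsto\hat\omega\in\mathcal N$ with law $\mathbb P$; measurable symmetric conductances $c_{x,y}(\omega)\ge0$ vanishing off the edges of $\mathrm{DT}(\hat\omega)$. (A1) $\mathcal P$ is $\theta$-invariant and $\mathcal P(\hat\omega=\emptyset)=0$; (A2) $m:=\mathbb E[\xi([0,1]^d)]\in(0,\infty)$; (A3) on a $\theta$-invariant measurable full-measure set, $\widehat{\theta_x\omega}=\tau_x\hat\omega$ and $c_{y-x,z-x}(\theta_x\omega)=c_{y,z}(\omega)$ for all $x$ and edges $\{y,z\}$. Finite range of dependence: $\exists L>0$ such that $\xi\cap A$, $\xi\cap B$ are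 independent under $\mathbb P$ for Borel $A,B$ at Euclidean distance $\ge L$. Negative association: for all $n,k$, weakly increasing $f:\mathbb R_+^n\to\mathbb R$, $g:\mathbb R_+^k\to\mathbb R$, pairwise disjoint bounded Borel $A_1,\dots,A_n,B_1,\dots,B_k$: $\mathrm{Cov}_{\mathbb P}(f(\xi(A_1),\dots,\xi(A_n)),g(\xi(B_1),\dots,\xi(B_k)))\le0$ whenever both have finite second moments. Condition $C(\alpha)$: $\exists\kappa>0$ with $\mathbb P(\xi(\Lambda_\ell)=0)\le\kappa\ell^{-\alpha}$ for all $\ell\ge1$. *)

theory Defs
  imports "HOL-Probability.Probability"
begin

definition lf_sets :: "'a::euclidean_space set set" where
  "lf_sets = {\<xi>. \<forall>K. bounded K \<longrightarrow> finite (\<xi> \<inter> K)}"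

text \<open>Counting measure xi(A); used only for bounded A, where it is finite.\<close>
definition pcount :: "'a::euclidean_space set \<Rightarrow> 'a set \<Rightarrow> nat" where
  "pcount \<xi> A = card (\<xi> \<inter> A)"

definition N_space :: "'a::euclidean_space set measure" where
  "N_space = sigma lf_sets
     {{\<xi> \<in> lf_sets. pcount \<xi> A = k} | A k. A \<in> sets borel \<and> bounded A}"

definition Lambda :: "real \<Rightarrow> 'a::euclidean_space set" where
  "Lambda l = cbox (- (l *\<^sub>R One)) (l *\<^sub>R One)"

definition Vor :: "'a::euclidean_space set \<Rightarrow> 'a \<Rightarrow> 'a set" where
  "Vor \<xi> x = {y. \<forall>z\<in>\<xi>. dist y x \<le> dist y z}"

text \<open>{x,y} is an edge of DT(xi): the Voronoi cells share a (d-1)-dimensional face.\<close>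
definition DT_edge :: "'a::euclidean_space set \<Rightarrow> 'a \<Rightarrow> 'a \<Rightarrow> bool" where
  "DT_edge \<xi> x y \<longleftrightarrow> x \<in> \<xi> \<and> y \<in> \<xi> \<and> x \<noteq> y \<and>
     aff_dim (Vor \<xi> x \<inter> Vor \<xi> y) = int DIM('a) - 1"

definition finite_range_dep :: "'a::euclidean_space set measure \<Rightarrow> bool" where
  "finite_range_dep P \<longleftrightarrow> (\<exists>L>0. \<forall>A\<in>sets borel. \<forall>B\<in>sets borel.
      setdist A B \<ge> L \<longrightarrow>
      prob_space.indep_var P N_space (\<lambda>\<xi>. \<xi> \<inter> A) N_space (\<lambda>\<xi>. \<xi> \<inter> B))"

text \<open>f : R_+^n -> R weakly increasing, with R_+^n encoded as functions nat => real
  vanishing outside {..<n}.\<close>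
definition incr_on_orthant :: "nat \<Rightarrow> ((nat \<Rightarrow> real) \<Rightarrow> real) \<Rightarrow> bool" where
  "incr_on_orthant n f \<longleftrightarrow> (\<forall>u v. (\<forall>i<n. 0 \<le> u i \<and> u i \<le> v i) \<and>
      (\<forall>i\<ge>n. u i = 0 \<and> v i = 0) \<longrightarrow> f u \<le> f v)"

definition count_vec :: "nat \<Rightarrow> (nat \<Rightarrow> 'a::euclidean_space set) \<Rightarrow> 'a set \<Rightarrow> nat \<Rightarrow> real" where
  "count_vec n A \<xi> = (\<lambda>i. if i < n then real (pcount \<xi> (A i)) else 0)"

definition neg_assoc :: "'a::euclidean_space set measure \<Rightarrow> bool" where
  "neg_assoc P \<longleftrightarrow> (\<forall>n k f g A B.
      incr_on_orthant n f \<and> incr_on_orthant k g \<and>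
      (\<forall>i<n. A i \<in> sets borel \<and> bounded (A i)) \<and>
      (\<forall>j<k. B j \<in> sets borel \<and> bounded (B j)) \<and>
      disjoint_family_on A {..<n} \<and> disjoint_family_on B {..<k} \<and>
      (\<forall>i<n. \<forall>j<k. A i \<inter> B j = {}) \<and>
      integrable P (\<lambda>\<xi>. (f (count_vec n A \<xi>))\<^sup>2) \<and>
      integrable P (\<lambda>\<xi>. (g (count_vec k B \<xi>))\<^sup>2) \<longrightarrow>
      (\<integral>\<xi>. f (count_vec n A \<xi>) * g (count_vec k B \<xi>) \<partial>P)
        - (\<integral>\<xi>. f (count_vec n A \<xi>) \<partial>P) * (\<integral>\<xi>. g (count_vec k B \<xi>) \<partial>P) \<le> 0)"

definition condition_C :: "'a::euclidean_space set measure \<Rightarrow> real \<Rightarrow> bool" where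
  "condition_C P \<alpha> \<longleftrightarrow> (\<exists>\<kappa>>0. \<forall>l\<ge>1.
      measure P {\<xi> \<in> space P. pcount \<xi> (Lambda l) = 0} \<le> \<kappa> * l powr (-\<alpha>))"

end

theory Submission
  imports Defs
begin

(* Let q(A) be the probability that no point of the process lies in A (the void probability).
   By stationarity every unit box x + [0,1]^d has the same void probability q < 1, the strict
   inequality coming from the positive intensity. Finite range of dependence and negative
   association both make q submultiplicative on pairs of sets at distance at least some L.
   Lambda_l contains about (l/(L+1))^d unit boxes that are pairwise L-separated, hence
   q(Lambda_l) <= q^(c l^d). Condition C(alpha) follows since exp(-C l) <= kappa l^(-alpha). *)

definition void_prob :: "'a::euclidean_space set measure \<Rightarrow> 'a set \<Rightarrow> real" where
  "void_prob P A = measure P {\<xi> \<in> space P. pcount \<xi> A = 0}"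

definition void_prob_submult :: "'a::euclidean_space set measure \<Rightarrow> real \<Rightarrow> bool" where
  "void_prob_submult P L \<longleftrightarrow> (\<forall>A\<in>sets borel. \<forall>B\<in>sets borel. bounded A \<longrightarrow> bounded B \<longrightarrow>
     (\<forall>a\<in>A. \<forall>b\<in>B. L \<le> dist a b) \<longrightarrow> void_prob P (A \<union> B) \<le> void_prob P A * void_prob P B)"

lemma void_prob_submultD:
  "void_prob_submult P L \<Longrightarrow> A \<in> sets borel \<Longrightarrow> bounded A \<Longrightarrow> B \<in> sets borel \<Longrightarrow> bounded B \<Longrightarrow>
    (\<And>a b. a \<in> A \<Longrightarrow> b \<in> B \<Longrightarrow> L \<le> dist a b) \<Longrightarrow>
    void_prob P (A \<union> B) \<le> void_prob P A * void_prob P B"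
  unfolding void_prob_submult_def by blast

lemma space_N_space: "space N_space = lf_sets"
  unfolding N_space_def by (rule space_measure_of) auto

lemma pcount_eq_sets_N_space:
  "A \<in> sets borel \<Longrightarrow> bounded A \<Longrightarrow> {\<xi> \<in> lf_sets. pcount \<xi> A = k} \<in> sets N_space"
  unfolding N_space_def by (subst sets_measure_of) auto

lemma lf_sets_Int: "\<xi> \<in> lf_sets \<Longrightarrow> \<xi> \<inter> A \<in> lf_sets"
  unfolding lf_sets_def by (auto intro: finite_subset)

lemma pcount_eq_0_iff: "\<xi> \<in> lf_sets \<Longrightarrow> bounded A \<Longrightarrow> pcount \<xi> A = 0 \<longleftrightarrow> \<xi> \<inter> A = {}"
  unfolding lf_sets_def pcount_def by auto

lemma pcount_Int_self: "pcount (\<xi> \<inter> A) A = pcount \<xi> A"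
  by (simp add: pcount_def Int_assoc)

lemma pcount_Un_eq_0_iff:
  "\<xi> \<in> lf_sets \<Longrightarrow> bounded A \<Longrightarrow> bounded B \<Longrightarrow>
    pcount \<xi> (A \<union> B) = 0 \<longleftrightarrow> pcount \<xi> A = 0 \<and> pcount \<xi> B = 0"
  by (auto simp: pcount_eq_0_iff)

lemma void_event_sets:
  "sets P = sets N_space \<Longrightarrow> A \<in> sets borel \<Longrightarrow> bounded A \<Longrightarrow>
    {\<xi> \<in> space P. pcount \<xi> A = 0} \<in> sets P"
  using pcount_eq_sets_N_space[of A 0] by (simp add: sets_eq_imp_space_eq space_N_space)

lemma void_prob_empty: "prob_space P \<Longrightarrow> void_prob P {} = 1"
  by (simp add: void_prob_def pcount_def prob_space.prob_space)

lemma void_prob_antimono: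
  assumes "prob_space P" "sets P = sets N_space" "A \<subseteq> B"
    and "A \<in> sets borel" "B \<in> sets borel" "bounded B"
  shows "void_prob P B \<le> void_prob P A"
proof -
  have "{\<xi> \<in> space P. pcount \<xi> B = 0} \<subseteq> {\<xi> \<in> space P. pcount \<xi> A = 0}"
    using assms(3,6) bounded_subset[OF assms(6,3)]
    by (auto simp: pcount_eq_0_iff sets_eq_imp_space_eq[OF assms(2)] space_N_space) blast
  then show ?thesis
    unfolding void_prob_def using bounded_subset[OF assms(6,3)]
    by (intro finite_measure.finite_measure_mono prob_space.finite_measure assms void_event_sets)
qed

lemma void_prob_distr:
  assumes hat_meas: "hat \<in> M \<rightarrow>\<^sub>M N_space" and S: "S \<in> sets borel" "bounded S"
  shows "void_prob (distr M N_space hat) S = measure M {\<omega> \<in> space M. hat \<omega> \<inter> S = {}}"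
proof -
  have hat_lf: "hat \<omega> \<in> lf_sets" if "\<omega> \<in> space M" for \<omega>
    using measurable_space[OF hat_meas that] by (simp add: space_N_space)
  have "void_prob (distr M N_space hat) S
      = measure M (hat -` {\<xi> \<in> lf_sets. pcount \<xi> S = 0} \<inter> space M)"
    unfolding void_prob_def space_distr space_N_space
    by (rule measure_distr[OF hat_meas]) (auto intro: pcount_eq_sets_N_space S)
  also have "hat -` {\<xi> \<in> lf_sets. pcount \<xi> S = 0} \<inter> space M = {\<omega> \<in> space M. hat \<omega> \<inter> S = {}}"
    using hat_lf pcount_eq_0_iff[OF _ S(2)] by auto
  finally show ?thesis .
qed

lemma void_event_measurable:
  assumes hat_meas: "hat \<in> M \<rightarrow>\<^sub>M N_space" and S: "S \<in> sets borel" "bounded S"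
  shows "{\<omega> \<in> space M. hat \<omega> \<inter> S = {}} \<in> sets M"
proof -
  have "hat -` {\<xi> \<in> lf_sets. pcount \<xi> S = 0} \<inter> space M \<in> sets M"
    by (rule measurable_sets[OF hat_meas pcount_eq_sets_N_space[OF S]])
  also have "hat -` {\<xi> \<in> lf_sets. pcount \<xi> S = 0} \<inter> space M = {\<omega> \<in> space M. hat \<omega> \<inter> S = {}}"
    using measurable_space[OF hat_meas] pcount_eq_0_iff[OF _ S(2)] by (auto simp: space_N_space)
  finally show ?thesis .
qed

lemma void_prob_translate:
  fixes hat :: "'w \<Rightarrow> 'a::euclidean_space set"
  assumes \<theta>_meas: "\<theta> \<in> M \<rightarrow>\<^sub>M M" and \<theta>_inv: "distr M M \<theta> = M"
    and hat_meas: "hat \<in> M \<rightarrow>\<^sub>M N_space"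
    and shift: "AE \<omega> in M. hat (\<theta> \<omega>) = (\<lambda>p. p - x) ` hat \<omega>"
    and S: "S \<in> sets borel" "bounded S"
  shows "void_prob (distr M N_space hat) ((+) x ` S) = void_prob (distr M N_space hat) S"
proof -
  let ?void = "\<lambda>T. {\<omega> \<in> space M. hat \<omega> \<inter> T = {}}"
  have xS: "(+) x ` S \<in> sets borel" "bounded ((+) x ` S)"
  proof -
    have "(\<lambda>p. p - x) -` S \<inter> space borel \<in> sets borel"
      by (rule measurable_sets[OF _ S(1)]) simp
    moreover have "(\<lambda>p. p - x) -` S = (+) x ` S"
      by (force simp: algebra_simps)
    ultimately show "(+) x ` S \<in> sets borel" by simp
    show "bounded ((+) x ` S)" using S(2) by (rule bounded_translation)
  qed
  have "measure M (?void S) = measure (distr M M \<theta>) (?void S)"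
    by (simp add: \<theta>_inv)
  also have "\<dots> = measure M (\<theta> -` ?void S \<inter> space M)"
    by (rule measure_distr[OF \<theta>_meas void_event_measurable[OF hat_meas S]])
  also have "\<dots> = measure M (?void ((+) x ` S))"
  proof (rule measure_eq_AE)
    have disjoint_shift: "(\<lambda>p. p - x) ` H \<inter> S = {} \<longleftrightarrow> H \<inter> (+) x ` S = {}" for H
      by (force simp: algebra_simps)
    show "AE \<omega> in M. (\<omega> \<in> \<theta> -` ?void S \<inter> space M) = (\<omega> \<in> ?void ((+) x ` S))"
      using shift by eventually_elim (auto simp: disjoint_shift dest: measurable_space[OF \<theta>_meas])
  qed (use measurable_sets[OF \<theta>_meas void_event_measurable[OF hat_meas S]]
      void_event_measurable[OF hat_meas xS] in auto)
  finally show ?thesis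
    by (simp add: void_prob_distr[OF hat_meas S] void_prob_distr[OF hat_meas xS])
qed

lemma void_prob_unit_box_stationary:
  fixes \<theta> :: "'a::euclidean_space \<Rightarrow> 'w \<Rightarrow> 'w"
  assumes \<theta>_meas: "(\<lambda>(x, \<omega>). \<theta> x \<omega>) \<in> borel \<Otimes>\<^sub>M M \<rightarrow>\<^sub>M M"
    and \<theta>_inv: "\<And>x. distr M M (\<theta> x) = M"
    and hat_meas: "hat \<in> M \<rightarrow>\<^sub>M N_space"
    and shift: "\<And>x. AE \<omega> in M. hat (\<theta> x \<omega>) = (\<lambda>p. p - x) ` hat \<omega>"
  shows "void_prob (distr M N_space hat) (cbox x (x + One))
    = void_prob (distr M N_space hat) (cbox 0 One)"
proof -
  have "\<theta> x \<in> M \<rightarrow>\<^sub>M M"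
    using measurable_compose[OF measurable_Pair1' \<theta>_meas] by simp
  moreover have "cbox x (x + One) = (+) x ` cbox 0 One"
    using cbox_translation[of x 0 One] by simp
  ultimately show ?thesis
    by (simp add: void_prob_translate[OF _ \<theta>_inv hat_meas shift])
qed

lemma void_prob_less_1:
  assumes P: "prob_space P" "sets P = sets N_space" and S: "S \<in> sets borel" "bounded S"
    and intensity: "0 < (\<integral>\<^sup>+ \<xi>. of_nat (pcount \<xi> S) \<partial>P)"
  shows "void_prob P S < 1"
proof (rule ccontr)
  interpret prob_space P by (rule P(1))
  assume "\<not> void_prob P S < 1"
  then have "prob {\<xi> \<in> space P. pcount \<xi> S = 0} = 1"
    using prob_le_1 unfolding void_prob_def by (meson antisym not_le)
  then have "AE \<xi> in P. pcount \<xi> S = 0"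
    using AE_in_set_eq_1[OF void_event_sets[OF P(2) S]] by simp
  then have "(\<integral>\<^sup>+ \<xi>. of_nat (pcount \<xi> S) \<partial>P) = (\<integral>\<^sup>+ \<xi>. 0 \<partial>P)"
    by (intro nn_integral_cong_AE) (auto elim: eventually_mono)
  with intensity show False by simp
qed

lemma finite_range_dep_imp_void_prob_submult:
  assumes P: "prob_space P" "sets P = sets N_space" and "finite_range_dep P"
  obtains L where "0 < L" "void_prob_submult P L"
proof -
  interpret prob_space P by (rule P(1))
  obtain L where "0 < L" and indep: "\<And>A B. A \<in> sets borel \<Longrightarrow> B \<in> sets borel \<Longrightarrow>
      L \<le> setdist A B \<Longrightarrow> indep_var N_space (\<lambda>\<xi>. \<xi> \<inter> A) N_space (\<lambda>\<xi>. \<xi> \<inter> B)"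
    using assms(3) unfolding finite_range_dep_def by blast
  have "void_prob P (A \<union> B) \<le> void_prob P A * void_prob P B"
    if A: "A \<in> sets borel" "bounded A" and B: "B \<in> sets borel" "bounded B"
      and sep: "\<forall>a\<in>A. \<forall>b\<in>B. L \<le> dist a b" for A B
  proof (cases "A = {} \<or> B = {}")
    case True
    then show ?thesis using void_prob_empty[OF P(1)] by auto
  next
    case False
    let ?void = "\<lambda>S. {\<zeta> \<in> lf_sets. pcount \<zeta> S = 0}"
    have "L \<le> setdist A B"
      using False sep by (intro le_setdistI) force+
    then have "prob ((\<lambda>\<xi>. (\<xi> \<inter> A, \<xi> \<inter> B)) -` (?void A \<times> ?void B) \<inter> space P) =
        prob ((\<lambda>\<xi>. \<xi> \<inter> A) -` ?void A \<inter> space P) * prob ((\<lambda>\<xi>. \<xi> \<inter> B) -` ?void B \<inter> space P)"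
      by (intro indep_varD[OF indep[OF A(1) B(1)]] pcount_eq_sets_N_space A B)
    moreover have "space P = lf_sets"
      by (simp add: sets_eq_imp_space_eq[OF P(2)] space_N_space)
    then have "(\<lambda>\<xi>. (\<xi> \<inter> A, \<xi> \<inter> B)) -` (?void A \<times> ?void B) \<inter> space P
          = {\<xi> \<in> space P. pcount \<xi> (A \<union> B) = 0}"
        and "(\<lambda>\<xi>. \<xi> \<inter> S) -` ?void S \<inter> space P = {\<xi> \<in> space P. pcount \<xi> S = 0}" for S
      using pcount_Un_eq_0_iff[OF _ A(2) B(2)] by (auto simp: lf_sets_Int pcount_Int_self)
    ultimately show ?thesis
      unfolding void_prob_def by simp
  qed
  then show thesis
    using that[OF \<open>0 < L\<close>] unfolding void_prob_submult_def by blast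
qed

lemma integral_void_indicator:
  assumes P: "prob_space P" "sets P = sets N_space" and S: "S \<in> sets borel" "bounded S"
  shows "(\<integral>\<xi>. (if pcount \<xi> S = 0 then 1 else 0) \<partial>P) = void_prob P S"
proof -
  interpret prob_space P by (rule P(1))
  have "(\<integral>\<xi>. (if pcount \<xi> S = 0 then 1 else 0) \<partial>P)
      = (\<integral>\<xi>. indicator {\<xi> \<in> space P. pcount \<xi> S = 0} \<xi> \<partial>P)"
    by (intro Bochner_Integration.integral_cong) (auto simp: indicator_def)
  also have "\<dots> = void_prob P S"
    unfolding void_prob_def using void_event_sets[OF P(2) S]
    by (simp add: emeasure_eq_measure)
  finally show ?thesis .
qed

lemma integrable_void_indicator:
  assumes P: "prob_space P" "sets P = sets N_space" and S: "S \<in> sets borel" "bounded S"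
  shows "integrable P (\<lambda>\<xi>. if pcount \<xi> S = 0 then 1 else 0 :: real)"
proof -
  interpret prob_space P by (rule P(1))
  have "integrable P (indicator {\<xi> \<in> space P. pcount \<xi> S = 0} :: _ \<Rightarrow> real)"
    using void_event_sets[OF P(2) S]
    by (intro integrable_real_indicator) (simp_all add: emeasure_eq_measure)
  moreover have "integrable P (indicator {\<xi> \<in> space P. pcount \<xi> S = 0} :: _ \<Rightarrow> real)
      \<longleftrightarrow> integrable P (\<lambda>\<xi>. if pcount \<xi> S = 0 then 1 else 0 :: real)"
    by (intro Bochner_Integration.integrable_cong) (auto simp: indicator_def)
  ultimately show ?thesis by simp
qed

lemma neg_assoc_imp_void_prob_submult:
  assumes P: "prob_space P" "sets P = sets N_space" and "neg_assoc P" and "0 < L"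
  shows "void_prob_submult P L"
  unfolding void_prob_submult_def
proof (intro ballI impI)
  fix A B :: "'a set"
  assume A: "A \<in> sets borel" "bounded A" and B: "B \<in> sets borel" "bounded B"
    and sep: "\<forall>a\<in>A. \<forall>b\<in>B. L \<le> dist a b"
  have disjoint: "A \<inter> B = {}"
    using sep \<open>0 < L\<close> by fastforce
  \<comment> \<open>negative association for the increasing functions \<open>-1{\<xi>(A) = 0}\<close> and \<open>-1{\<xi>(B) = 0}\<close>\<close>
  define f :: "(nat \<Rightarrow> real) \<Rightarrow> real" where "f u = - (if u 0 = 0 then 1 else 0)" for u
  let ?fS = "\<lambda>S \<xi>. f (count_vec 1 (\<lambda>_. S) \<xi>)"
  have fS: "?fS S \<xi> = - (if pcount \<xi> S = 0 then 1 else 0)" for S :: "'a set" and \<xi>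
    by (simp add: f_def count_vec_def)
  have "incr_on_orthant 1 f"
    unfolding incr_on_orthant_def f_def by auto
  moreover have "integrable P (\<lambda>\<xi>. (?fS S \<xi>)\<^sup>2)" if "S \<in> sets borel" "bounded S" for S
  proof -
    have "(\<lambda>\<xi>. (?fS S \<xi>)\<^sup>2) = (\<lambda>\<xi>. if pcount \<xi> S = 0 then 1 else 0)"
      unfolding fS by (simp add: fun_eq_iff)
    then show ?thesis using integrable_void_indicator[OF P that] by simp
  qed
  ultimately have "(\<integral>\<xi>. ?fS A \<xi> * ?fS B \<xi> \<partial>P) - (\<integral>\<xi>. ?fS A \<xi> \<partial>P) * (\<integral>\<xi>. ?fS B \<xi> \<partial>P) \<le> 0"
    using \<open>neg_assoc P\<close> A B disjoint
    unfolding neg_assoc_def by (auto simp: disjoint_family_on_def)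
  moreover have "(\<integral>\<xi>. ?fS A \<xi> * ?fS B \<xi> \<partial>P) = void_prob P (A \<union> B)"
  proof -
    have "space P = lf_sets"
      by (simp add: sets_eq_imp_space_eq[OF P(2)] space_N_space)
    then have "(\<integral>\<xi>. ?fS A \<xi> * ?fS B \<xi> \<partial>P) = (\<integral>\<xi>. (if pcount \<xi> (A \<union> B) = 0 then 1 else 0) \<partial>P)"
      using pcount_Un_eq_0_iff[OF _ A(2) B(2)] unfolding fS by (intro Bochner_Integration.integral_cong) auto
    then show ?thesis
      using integral_void_indicator[OF P] A B by simp
  qed
  ultimately show "void_prob P (A \<union> B) \<le> void_prob P A * void_prob P B"
    using integral_void_indicator[OF P A] integral_void_indicator[OF P B] unfolding fS by simp
qed

lemma void_prob_UN_le_power: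
  assumes P: "prob_space P" and submult: "void_prob_submult P L" and "finite F"
    and S: "\<And>x. x \<in> F \<Longrightarrow> S x \<in> sets borel" "\<And>x. x \<in> F \<Longrightarrow> bounded (S x)"
    and q: "\<And>x. x \<in> F \<Longrightarrow> void_prob P (S x) \<le> q"
    and sep: "\<And>x y a b. x \<in> F \<Longrightarrow> y \<in> F \<Longrightarrow> x \<noteq> y \<Longrightarrow> a \<in> S x \<Longrightarrow> b \<in> S y \<Longrightarrow> L \<le> dist a b"
  shows "void_prob P (\<Union>x\<in>F. S x) \<le> q ^ card F"
  using \<open>finite F\<close> S q sep
proof (induction F rule: finite_induct)
  case empty
  then show ?case by (simp add: void_prob_empty[OF P])
next
  case (insert x F)
  have "void_prob P (S x \<union> (\<Union>y\<in>F. S y)) \<le> void_prob P (S x) * void_prob P (\<Union>y\<in>F. S y)"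
    by (rule void_prob_submultD[OF submult]) (use insert in \<open>auto intro!: sets.finite_UN, metis\<close>)
  also have "\<dots> \<le> q * q ^ card F"
  proof (intro mult_mono)
    show "void_prob P (\<Union>y\<in>F. S y) \<le> q ^ card F"
      using insert.prems by (intro insert.IH) blast+
    show "0 \<le> q"
      using insert.prems(3)[of x] measure_nonneg order_trans unfolding void_prob_def by blast
  qed (use insert.prems in \<open>auto simp: void_prob_def\<close>)
  finally show ?case
    using insert.hyps by simp
qed

lemma unit_box_subset_Lambda:
  "(\<And>b. b \<in> Basis \<Longrightarrow> - l \<le> x \<bullet> b \<and> x \<bullet> b + 1 \<le> l) \<Longrightarrow> cbox x (x + One) \<subseteq> Lambda l"
  unfolding Lambda_def by (subst subset_box) (auto simp: inner_add_left)

lemma dist_unit_boxes_ge: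
  fixes x y :: "'a::euclidean_space"
  assumes "b \<in> Basis" "s \<le> \<bar>x \<bullet> b - y \<bullet> b\<bar>" "a \<in> cbox x (x + One)" "a' \<in> cbox y (y + One)"
  shows "s - 1 \<le> dist a a'"
proof -
  have "x \<bullet> b \<le> a \<bullet> b" "a \<bullet> b \<le> x \<bullet> b + 1" "y \<bullet> b \<le> a' \<bullet> b" "a' \<bullet> b \<le> y \<bullet> b + 1"
    using assms(1,3,4) by (auto simp: mem_box inner_add_left)
  then have "s - 1 \<le> \<bar>(a - a') \<bullet> b\<bar>"
    using assms(2) unfolding inner_diff_left by arith
  also have "\<dots> \<le> dist a a'"
    unfolding dist_norm by (rule Basis_le_norm[OF assms(1)])
  finally show ?thesis .
qed

lemma separated_unit_boxes_in_Lambda: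
  fixes l s :: real
  assumes "1 \<le> l" "0 < s"
  obtains F :: "'a::euclidean_space set"
  where "finite F" "(l / s) ^ DIM('a) \<le> card F"
    and "\<And>x. x \<in> F \<Longrightarrow> cbox x (x + One) \<subseteq> Lambda l"
    and "\<And>x y a a'. x \<in> F \<Longrightarrow> y \<in> F \<Longrightarrow> x \<noteq> y \<Longrightarrow> a \<in> cbox x (x + One) \<Longrightarrow>
           a' \<in> cbox y (y + One) \<Longrightarrow> s - 1 \<le> dist a a'"
proof -
  define m where "m = nat \<lceil>l / s\<rceil>"
  have m: "l / s \<le> m" "m < l / s + 1"
    using ceiling_correct[of "l / s"] assms unfolding m_def by auto
  define K :: "('a \<Rightarrow> nat) set" where "K = PiE Basis (\<lambda>_. {..<m})"
  define g :: "('a \<Rightarrow> nat) \<Rightarrow> 'a" where "g k = (\<Sum>b\<in>Basis. (s * k b) *\<^sub>R b) - l *\<^sub>R One" for k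
  have g_inner: "g k \<bullet> b = s * k b - l" if "b \<in> Basis" for k b
    using that unfolding g_def inner_diff_left inner_sum_left_Basis[OF that] by simp
  have K_eqI: "k = k'" if "k \<in> K" "k' \<in> K" "\<And>b. b \<in> Basis \<Longrightarrow> k b = k' b" for k k'
    using that unfolding K_def by (metis PiE_ext)
  have "inj_on g K"
  proof (rule inj_onI)
    fix k k' assume "k \<in> K" "k' \<in> K" "g k = g k'"
    show "k = k'"
    proof (rule K_eqI[OF \<open>k \<in> K\<close> \<open>k' \<in> K\<close>])
      fix b :: 'a assume "b \<in> Basis"
      then have "s * k b - l = s * k' b - l"
        using \<open>g k = g k'\<close> by (metis g_inner)
      then show "k b = k' b"
        using \<open>0 < s\<close> by simp
    qed
  qed
  then have "card (g ` K) = m ^ DIM('a)"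
    by (simp add: card_image K_def card_PiE)
  moreover have "(l / s) ^ DIM('a) \<le> real m ^ DIM('a)"
    using assms m by (intro power_mono) auto
  ultimately have "(l / s) ^ DIM('a) \<le> card (g ` K)"
    by simp
  moreover have "cbox (g k) (g k + One) \<subseteq> Lambda l" if "k \<in> K" for k
  proof (rule unit_box_subset_Lambda)
    fix b :: 'a assume b: "b \<in> Basis"
    have "k b + 1 \<le> m"
      using that b unfolding K_def by (auto simp: PiE_iff Suc_le_eq)
    then have "real (k b) + 1 \<le> m"
      by (metis of_nat_1 of_nat_add of_nat_le_iff)
    also have "\<dots> < l / s + 1"
      by (rule m(2))
    finally have "s * k b < l"
      using \<open>0 < s\<close> by (simp add: field_simps)
    then show "- l \<le> g k \<bullet> b \<and> g k \<bullet> b + 1 \<le> l"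
      using assms b by (simp add: g_inner)
  qed
  moreover have "s - 1 \<le> dist a a'"
    if k: "k \<in> K" "k' \<in> K" "g k \<noteq> g k'"
      and a: "a \<in> cbox (g k) (g k + One)" "a' \<in> cbox (g k') (g k' + One)"
    for k k' a a'
  proof -
    obtain b :: 'a where b: "b \<in> Basis" "k b \<noteq> k' b"
      using K_eqI k by blast
    then have "s \<le> \<bar>g k \<bullet> b - g k' \<bullet> b\<bar>"
      using \<open>0 < s\<close> by (simp add: g_inner abs_mult flip: right_diff_distrib)
    then show ?thesis
      by (rule dist_unit_boxes_ge[OF b(1) _ a])
  qed
  ultimately show thesis
    by (intro that[of "g ` K"]) (auto simp: K_def finite_PiE)
qed

lemma void_prob_Lambda_le_exp:
  fixes P :: "'a::euclidean_space set measure"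
  assumes P: "prob_space P" "sets P = sets N_space"
    and box: "\<And>x. void_prob P (cbox x (x + One)) \<le> q" and "q < 1"
    and submult: "void_prob_submult P L"
  obtains C where "0 < C" "\<And>l. 1 \<le> l \<Longrightarrow> void_prob P (Lambda l) \<le> exp (- C * l ^ DIM('a))"
proof -
  define s where "s = \<bar>L\<bar> + 1"
  \<comment> \<open>\<open>q'\<close> stays away from 0 so that \<open>ln q'\<close> is meaningful\<close>
  define q' where "q' = max q (1 / 2)"
  define C where "C = - ln q' / s ^ DIM('a)"
  have "0 < s" "L \<le> s - 1"
    by (simp_all add: s_def)
  have "0 < q'" "q' < 1" "q \<le> q'"
    using \<open>q < 1\<close> by (auto simp: q'_def)
  have "0 \<le> q"
    using box[of 0] measure_nonneg order_trans unfolding void_prob_def by blast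
  have "0 < C"
    using \<open>0 < s\<close> \<open>0 < q'\<close> \<open>q' < 1\<close> by (simp add: C_def divide_neg_pos)
  moreover have "void_prob P (Lambda l) \<le> exp (- C * l ^ DIM('a))" if l: "1 \<le> l" for l
  proof -
    obtain F :: "'a set" where F: "finite F" "(l / s) ^ DIM('a) \<le> card F"
      "\<And>x. x \<in> F \<Longrightarrow> cbox x (x + One) \<subseteq> Lambda l"
      "\<And>x y a a'. x \<in> F \<Longrightarrow> y \<in> F \<Longrightarrow> x \<noteq> y \<Longrightarrow> a \<in> cbox x (x + One) \<Longrightarrow>
         a' \<in> cbox y (y + One) \<Longrightarrow> s - 1 \<le> dist a a'"
      using separated_unit_boxes_in_Lambda[OF l \<open>0 < s\<close>] by blast
    have "void_prob P (Lambda l) \<le> void_prob P (\<Union>x\<in>F. cbox x (x + One))"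
      using F(1,3) by (intro void_prob_antimono P) (auto simp: Lambda_def)
    also have "\<dots> \<le> q ^ card F"
      using F \<open>L \<le> s - 1\<close> by (intro void_prob_UN_le_power[OF P(1) submult] box) force+
    also have "\<dots> \<le> q' ^ card F"
      using \<open>0 \<le> q\<close> \<open>q \<le> q'\<close> by (intro power_mono)
    also have "\<dots> = exp (card F * ln q')"
      using \<open>0 < q'\<close> by (simp add: exp_of_nat_mult)
    also have "\<dots> \<le> exp ((l / s) ^ DIM('a) * ln q')"
      using F(2) \<open>0 < q'\<close> \<open>q' < 1\<close> by (intro exp_mono mult_right_mono_neg) auto
    also have "(l / s) ^ DIM('a) * ln q' = - C * l ^ DIM('a)"
      by (simp add: C_def power_divide)
    finally show ?thesis .
  qed
  ultimately show thesis
    by (rule that)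
qed

lemma exp_neg_le_powr:
  fixes C \<alpha> l :: real
  assumes "0 < C" "0 < \<alpha>" "0 < l"
  shows "exp (- C * l) \<le> (\<alpha> / C) powr \<alpha> * l powr - \<alpha>"
proof -
  have "C * l / \<alpha> \<le> exp (C * l / \<alpha>)"
    using exp_ge_add_one_self[of "C * l / \<alpha>"] by linarith
  have "(C / \<alpha>) powr \<alpha> * l powr \<alpha> = (C * l / \<alpha>) powr \<alpha>"
    using assms by (simp add: powr_mult[symmetric] field_simps)
  also have "\<dots> \<le> exp (C * l / \<alpha>) powr \<alpha>"
    using assms \<open>C * l / \<alpha> \<le> exp (C * l / \<alpha>)\<close> by (intro powr_mono2) auto
  also have "\<dots> = exp (C * l)"
    using assms by (simp add: powr_def)
  finally show ?thesis
    using assms by (simp add: exp_minus powr_minus powr_divide field_simps)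
qed

lemma condition_C_if_exp_bound:
  fixes P :: "'a::euclidean_space set measure"
  assumes "0 < C" and bound: "\<And>l. 1 \<le> l \<Longrightarrow> void_prob P (Lambda l) \<le> exp (- C * l ^ DIM('a))"
    and "0 < \<alpha>"
  shows "condition_C P \<alpha>"
  unfolding condition_C_def
proof (intro exI[of _ "(\<alpha> / C) powr \<alpha>"] conjI allI impI)
  show "0 < (\<alpha> / C) powr \<alpha>"
    using assms by simp
  fix l :: real assume "1 \<le> l"
  have "l ^ 1 \<le> l ^ DIM('a)"
    using \<open>1 \<le> l\<close> by (intro power_increasing) auto
  then have "exp (- C * l ^ DIM('a)) \<le> exp (- C * l)"
    using \<open>0 < C\<close> by simp
  also have "\<dots> \<le> (\<alpha> / C) powr \<alpha> * l powr - \<alpha>"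
    using assms \<open>1 \<le> l\<close> by (intro exp_neg_le_powr) auto
  finally show "measure P {\<xi> \<in> space P. pcount \<xi> (Lambda l) = 0} \<le> (\<alpha> / C) powr \<alpha> * l powr - \<alpha>"
    using bound[OF \<open>1 \<le> l\<close>] unfolding void_prob_def by linarith
qed

theorem proposition4p6:
  fixes M :: "'w measure"
    and \<theta> :: "'a::euclidean_space \<Rightarrow> 'w \<Rightarrow> 'w"
    and hat :: "'w \<Rightarrow> 'a set"
    and c :: "'a \<Rightarrow> 'a \<Rightarrow> 'w \<Rightarrow> real"
    and P :: "'a set measure"
  assumes prob: "prob_space M"
    and \<theta>_meas: "(\<lambda>(x, \<omega>). \<theta> x \<omega>) \<in> borel \<Otimes>\<^sub>M M \<rightarrow>\<^sub>M M"
    and \<theta>_zero: "\<And>\<omega>. \<omega> \<in> space M \<Longrightarrow> \<theta> 0 \<omega> = \<omega>"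
    and \<theta>_add: "\<And>x y \<omega>. \<omega> \<in> space M \<Longrightarrow> \<theta> (x + y) \<omega> = \<theta> x (\<theta> y \<omega>)"
    and hat_meas: "hat \<in> M \<rightarrow>\<^sub>M N_space"
    and P_def: "P = distr M N_space hat"
    and c_meas: "\<And>x y. c x y \<in> borel_measurable M"
    and c_sym: "\<And>x y \<omega>. \<omega> \<in> space M \<Longrightarrow> c x y \<omega> = c y x \<omega>"
    and c_nonneg: "\<And>x y \<omega>. \<omega> \<in> space M \<Longrightarrow> 0 \<le> c x y \<omega>"
    and c_DT: "\<And>x y \<omega>. \<omega> \<in> space M \<Longrightarrow> \<not> DT_edge (hat \<omega>) x y \<Longrightarrow> c x y \<omega> = 0"
    and A1_inv: "\<And>x. distr M M (\<theta> x) = M"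
    and A1_nonempty: "emeasure M {\<omega> \<in> space M. hat \<omega> = {}} = 0"
    and A2: "0 < (\<integral>\<^sup>+ \<xi>. of_nat (pcount \<xi> (cbox 0 One)) \<partial>P)"
            "(\<integral>\<^sup>+ \<xi>. of_nat (pcount \<xi> (cbox 0 One)) \<partial>P) < \<infinity>"
    and A3: "\<exists>\<Omega>0 \<in> sets M. emeasure M \<Omega>0 = 1 \<and>
               (\<forall>x. \<forall>\<omega>\<in>space M. \<theta> x \<omega> \<in> \<Omega>0 \<longleftrightarrow> \<omega> \<in> \<Omega>0) \<and>
               (\<forall>\<omega>\<in>\<Omega>0. \<forall>x. hat (\<theta> x \<omega>) = (\<lambda>p. p - x) ` hat \<omega> \<and>
                  (\<forall>y z. DT_edge (hat \<omega>) y z \<longrightarrow> c (y - x) (z - x) (\<theta> x \<omega>) = c y z \<omega>))"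
    and dep: "finite_range_dep P \<or> neg_assoc P"
  shows "(\<exists>C>0. \<forall>l\<ge>1. measure P {\<xi> \<in> space P. pcount \<xi> (Lambda l) = 0}
              \<le> exp (- C * l ^ DIM('a)))
         \<and> (\<forall>\<alpha>>0. condition_C P \<alpha>)"
proof -
  \<comment> \<open>only invariance of \<open>M\<close>, the shift property of \<open>hat\<close> and positive intensity enter\<close>
  interpret M: prob_space M by (rule prob)
  have P: "prob_space P" "sets P = sets N_space"
    unfolding P_def by (simp_all add: M.prob_space_distr hat_meas)
  obtain \<Omega>0 where "\<Omega>0 \<in> sets M" "emeasure M \<Omega>0 = 1"
    and \<Omega>0_shift: "\<And>\<omega> x. \<omega> \<in> \<Omega>0 \<Longrightarrow> hat (\<theta> x \<omega>) = (\<lambda>p. p - x) ` hat \<omega>"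
    using A3 by (elim bexE conjE) blast
  then have "AE \<omega> in M. \<omega> \<in> \<Omega>0"
    by (subst M.AE_in_set_eq_1) (simp_all add: M.emeasure_eq_measure)
  then have shift: "AE \<omega> in M. hat (\<theta> x \<omega>) = (\<lambda>p. p - x) ` hat \<omega>" for x
    by eventually_elim (rule \<Omega>0_shift)
  have box: "void_prob P (cbox x (x + One)) \<le> void_prob P (cbox 0 One)" for x
    unfolding P_def using void_prob_unit_box_stationary[OF \<theta>_meas A1_inv hat_meas shift] by simp
  have "void_prob P (cbox 0 One) < 1"
    using A2(1) by (intro void_prob_less_1 P) auto
  moreover obtain L where "void_prob_submult P L"
    using dep finite_range_dep_imp_void_prob_submult[OF P] neg_assoc_imp_void_prob_submult[OF P, of 1]
    by auto
  ultimately obtain C where "0 < C"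
    and decay: "\<And>l. 1 \<le> l \<Longrightarrow> void_prob P (Lambda l) \<le> exp (- C * l ^ DIM('a))"
    using void_prob_Lambda_le_exp[OF P box] by blast
  show ?thesis
    using condition_C_if_exp_bound[OF \<open>0 < C\<close> decay] decay \<open>0 < C\<close>
    unfolding void_prob_def by blast
qed

end
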